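(* Let $\Gamma$ be a MaxSAT instance encoded with blocking variables, with $\mathrm{cost}(\Gamma)=k$, and let $A$ be the set of total assignments $\alpha\models\Gamma$ with $\mathrm{cost}(\alpha)=k$. Suppose every two distinct assignments in $A$ have Hamming distance at least $d$, and for every blocking variable $b$ there are $\alpha,\beta\in A$ with $\alpha(b)=0$, $\beta(b)=1$. Then every derivation in the cost-SPR calculus from $\Gamma$ that derives a unit clause $b$ for some blocking variable $b$ contains a clause introduced by the cost-SPR rule of width (number of literals) at least $d$.
   Context: Literals, clauses, CNFs (multisets of clauses), $\mathrm{Var}(\Gamma)$. A substitution $\sigma$ maps variables to $0$, $1$ or literals, extended by $\sigma(\lnot x)=\lnot\sigma(x)$; $(\sigma\circ\tau)(x)=\sigma(\tau(x))$. A (partial) assignment has $\sigma(x)\in\{0,1,x\}$; its domain is $\sigma^{-1}(\{0,1\})$; total means all variables assigned. $C{\upharpoonright}_\sigma$: apply $\sigma$ to literals and simplify; $\Gamma{\upharpoonright}_\sigma$ is the multiset of $C{\upharpoonright}_\sigma\ne1$, $C\in\Gamma$. $\lnot C$ is the partial assignment falsifying all literals of $C$. $\Gamma\vdash_1 C$ means unit propagation on $\Gamma{\upharpoonright}_{\lnot C}$ derives the empty clause; $\Gamma\vdash_1\Delta$ means this for all $D\in\Delta$. A MaxSAT instance encoded with blocking variables is a CNF $\Gamma=H\cup\{C_1\lor b_1,\dots,C_m\lor b_m\}$ with distinct fresh blocking variables $b_i$; $\mathrm{cost}(\alpha)=\sum_i\alpha(b_i)$; $\mathrm{cost}(\Gamma)=\min\{\mathrm{cost}(\alpha):\alpha\models\Gamma\}$.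 $C$ is cost-SPR w.r.t. $\Gamma$ if there is a partial assignment $\sigma$ with the same domain as $\lnot C$ such that (1) $\Gamma{\upharpoonright}_{\lnot C}\vdash_1(\Gamma\cup\{C\}){\upharpoonright}_\sigma$ and (2) $\mathrm{cost}(\tau\circ\sigma)\le\mathrm{cost}(\tau)$ for all total $\tau\supseteq\lnot C$. A cost-SPR calculus derivation from $\Gamma$: sequence $D_1,\dots,D_t$, each in $\Gamma$, or by weakening/resolution from earlier clauses, or cost-SPR w.r.t. $\Gamma\cup\{D_1,\dots,D_{i-1}\}$ with $\mathrm{Var}(D_i)\subseteq\mathrm{Var}(\Gamma)$. *)

theory Defs
  imports Main
begin

datatype 'v lit = Pos 'v | Neg 'v

fun var :: "'v lit \<Rightarrow> 'v" where
  "var (Pos x) = x" | "var (Neg x) = x"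

type_synonym 'v clause = "'v lit set"
type_synonym 'v cnf = "'v clause set"

definition vars_clause :: "'v clause \<Rightarrow> 'v set" where
  "vars_clause C = var ` C"

definition vars_cnf :: "'v cnf \<Rightarrow> 'v set" where
  "vars_cnf F = (\<Union>C\<in>F. vars_clause C)"

text \<open>Total assignments: 'v => bool.  Partial assignments: 'v => bool option
  (None means the variable is mapped to itself).\<close>

fun lit_true :: "('v \<Rightarrow> bool) \<Rightarrow> 'v lit \<Rightarrow> bool" where
  "lit_true \<alpha> (Pos x) = \<alpha> x" | "lit_true \<alpha> (Neg x) = (\<not> \<alpha> x)"

definition models :: "('v \<Rightarrow> bool) \<Rightarrow> 'v cnf \<Rightarrow> bool" where
  "models \<alpha> F = (\<forall>C\<in>F. \<exists>l\<in>C. lit_true \<alpha> l)"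

fun lit_val :: "('v \<Rightarrow> bool option) \<Rightarrow> 'v lit \<Rightarrow> bool option" where
  "lit_val \<sigma> (Pos x) = \<sigma> x" | "lit_val \<sigma> (Neg x) = map_option Not (\<sigma> x)"

text \<open>C restricted by sigma: None encodes the constant 1 (clause satisfied).\<close>
definition restrict_clause :: "('v \<Rightarrow> bool option) \<Rightarrow> 'v clause \<Rightarrow> 'v clause option" where
  "restrict_clause \<sigma> C =
     (if \<exists>l\<in>C. lit_val \<sigma> l = Some True then None
      else Some {l\<in>C. lit_val \<sigma> l = None})"

definition restrict_cnf :: "('v \<Rightarrow> bool option) \<Rightarrow> 'v cnf \<Rightarrow> 'v cnf" where
  "restrict_cnf \<sigma> F = {D. \<exists>C\<in>F. restrict_clause \<sigma> C = Some D}"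

definition neg_clause :: "'v clause \<Rightarrow> 'v \<Rightarrow> bool option" where
  "neg_clause C x = (if Pos x \<in> C then Some False else if Neg x \<in> C then Some True else None)"

definition unit_asg :: "'v lit \<Rightarrow> 'v \<Rightarrow> bool option" where
  "unit_asg l = neg_clause {case l of Pos x \<Rightarrow> Neg x | Neg x \<Rightarrow> Pos x}"

definition compose :: "('v \<Rightarrow> bool) \<Rightarrow> ('v \<Rightarrow> bool option) \<Rightarrow> 'v \<Rightarrow> bool" where
  "compose \<tau> \<sigma> x = (case \<sigma> x of Some b \<Rightarrow> b | None \<Rightarrow> \<tau> x)"

definition extends :: "('v \<Rightarrow> bool) \<Rightarrow> ('v \<Rightarrow> bool option) \<Rightarrow> bool" where
  "extends \<tau> \<rho> = (\<forall>x b. \<rho> x = Some b \<longrightarrow> \<tau> x = b)"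

inductive up_refutes :: "'v cnf \<Rightarrow> bool" where
  empty: "{} \<in> F \<Longrightarrow> up_refutes F"
| unit: "{l} \<in> F \<Longrightarrow> up_refutes (restrict_cnf (unit_asg l) F) \<Longrightarrow> up_refutes F"

definition up_implies :: "'v cnf \<Rightarrow> 'v clause \<Rightarrow> bool" where
  "up_implies F C = up_refutes (restrict_cnf (neg_clause C) F)"

definition maxsat_enc :: "'v cnf \<Rightarrow> 'v clause list \<Rightarrow> 'v list \<Rightarrow> 'v cnf \<Rightarrow> bool" where
  "maxsat_enc H Cs bs \<Gamma> =
     (length Cs = length bs \<and> distinct bs \<and> finite H \<and> (\<forall>C\<in>H. finite C)
      \<and> (\<forall>C\<in>set Cs. finite C)
      \<and> (\<forall>b\<in>set bs. b \<notin> vars_cnf H \<and> (\<forall>C\<in>set Cs. b \<notin> vars_clause C))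
      \<and> \<Gamma> = H \<union> {insert (Pos (bs ! i)) (Cs ! i) | i. i < length bs})"

definition cost :: "'v list \<Rightarrow> ('v \<Rightarrow> bool) \<Rightarrow> nat" where
  "cost bs \<alpha> = (\<Sum>i<length bs. if \<alpha> (bs ! i) then 1 else 0)"

definition cnf_cost :: "'v list \<Rightarrow> 'v cnf \<Rightarrow> nat" where
  "cnf_cost bs \<Gamma> = Min {cost bs \<alpha> | \<alpha>. models \<alpha> \<Gamma>}"

definition hamming :: "'v set \<Rightarrow> ('v \<Rightarrow> bool) \<Rightarrow> ('v \<Rightarrow> bool) \<Rightarrow> nat" where
  "hamming V \<alpha> \<beta> = card {x\<in>V. \<alpha> x \<noteq> \<beta> x}"

definition cost_spr :: "'v list \<Rightarrow> 'v cnf \<Rightarrow> 'v clause \<Rightarrow> bool" where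
  "cost_spr bs F C =
     (\<exists>\<sigma>. dom \<sigma> = dom (neg_clause C)
        \<and> (\<forall>D\<in>restrict_cnf \<sigma> (insert C F). up_implies (restrict_cnf (neg_clause C) F) D)
        \<and> (\<forall>\<tau>. extends \<tau> (neg_clause C) \<longrightarrow> cost bs (compose \<tau> \<sigma>) \<le> cost bs \<tau>))"

datatype rule_tag = Axiom | Weakening | Resolution | CostSPR

fun valid_step :: "'v list \<Rightarrow> 'v cnf \<Rightarrow> 'v clause list \<Rightarrow> 'v clause \<times> rule_tag \<Rightarrow> bool" where
  "valid_step bs \<Gamma> prev (D, Axiom) = (D \<in> \<Gamma>)"
| "valid_step bs \<Gamma> prev (D, Weakening) = (finite D \<and> (\<exists>C\<in>set prev. C \<subseteq> D))"
| "valid_step bs \<Gamma> prev (D, Resolution) =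
     (\<exists>C1\<in>set prev. \<exists>C2\<in>set prev. \<exists>x. Pos x \<in> C1 \<and> Neg x \<in> C2
        \<and> D = (C1 - {Pos x}) \<union> (C2 - {Neg x}))"
| "valid_step bs \<Gamma> prev (D, CostSPR) =
     (finite D \<and> cost_spr bs (\<Gamma> \<union> set prev) D \<and> vars_clause D \<subseteq> vars_cnf \<Gamma>)"

definition derivation :: "'v list \<Rightarrow> 'v cnf \<Rightarrow> ('v clause \<times> rule_tag) list \<Rightarrow> bool" where
  "derivation bs \<Gamma> Ds = (\<forall>i<length Ds. valid_step bs \<Gamma> (map fst (take i Ds)) (Ds ! i))"

end

theory Submission
  imports Defs
begin

text \<open>
  Clauses derived by weakening and resolution are true in every model of the clauses they
  come from, so by induction along the derivation it suffices to show that every cost-SPR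
  clause C of width below d is true in every optimal assignment \<alpha>. If \<alpha> falsified C, then
  \<alpha> extends the negation of C, and the witness \<sigma> of the cost-SPR condition yields the
  assignment \<alpha> \<circ> \<sigma>: it satisfies all clauses so far together with C (unit propagation is
  sound) and costs no more than \<alpha>, so it is again optimal. But it differs from \<alpha> only on
  the fewer than d variables of C, so by the distance hypothesis it coincides with \<alpha> on
  all variables of the instance, and \<alpha> satisfies C after all. Finally, a unit clause b
  fails in an optimal assignment with b false.
\<close>

lemma extends_neg_clause:
  assumes "\<forall>l\<in>C. \<not> lit_true \<alpha> l"
  shows "extends \<alpha> (neg_clause C)"
  using assms unfolding extends_def neg_clause_def
  by (auto split: if_splits; metis lit_true.simps)

lemma lit_true_if_extends:
  assumes "extends \<alpha> \<rho>" and "lit_val \<rho> l = Some v"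
  shows "lit_true \<alpha> l = v"
  using assms unfolding extends_def by (cases l) auto

lemma models_restrict_cnf:
  assumes ext: "extends \<alpha> \<rho>" and "models \<alpha> F"
  shows "models \<alpha> (restrict_cnf \<rho> F)"
  unfolding models_def restrict_cnf_def
proof clarify
  fix C D assume "C \<in> F" and restr: "restrict_clause \<rho> C = Some D"
  then obtain l where l: "l \<in> C" "lit_true \<alpha> l"
    using \<open>models \<alpha> F\<close> unfolding models_def by blast
  have not_sat: "\<forall>l\<in>C. lit_val \<rho> l \<noteq> Some True" and D: "D = {l\<in>C. lit_val \<rho> l = None}"
    using restr unfolding restrict_clause_def by (auto split: if_splits)
  have "lit_val \<rho> l = None"
    using not_sat l lit_true_if_extends[OF ext, of l] by (cases "lit_val \<rho> l") auto
  then show "\<exists>l\<in>D. lit_true \<alpha> l" using l D by blast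
qed

lemma up_refutes_unsat: "up_refutes F \<Longrightarrow> \<not> models \<alpha> F"
proof (induction rule: up_refutes.induct)
  case (empty F)
  then show ?case unfolding models_def by blast
next
  case (unit l F)
  show ?case
  proof
    assume F: "models \<alpha> F"
    then have "lit_true \<alpha> l" using unit.hyps unfolding models_def by blast
    then have "extends \<alpha> (unit_asg l)"
      unfolding unit_asg_def by (intro extends_neg_clause) (cases l; auto)
    then have "models \<alpha> (restrict_cnf (unit_asg l) F)" using F by (rule models_restrict_cnf)
    then show False using unit.IH by blast
  qed
qed

lemma up_implies_sound:
  assumes "up_implies G C" and "models \<alpha> G"
  shows "\<exists>l\<in>C. lit_true \<alpha> l"
proof (rule ccontr)
  assume "\<not> ?thesis"
  then have "extends \<alpha> (neg_clause C)" by (intro extends_neg_clause) blast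
  then have "models \<alpha> (restrict_cnf (neg_clause C) G)"
    using assms(2) by (rule models_restrict_cnf)
  then show False using up_refutes_unsat assms(1) unfolding up_implies_def by blast
qed

lemma models_compose:
  assumes "models \<alpha> (restrict_cnf \<sigma> F)"
  shows "models (compose \<alpha> \<sigma>) F"
  unfolding models_def
proof
  fix C assume "C \<in> F"
  show "\<exists>l\<in>C. lit_true (compose \<alpha> \<sigma>) l"
  proof (cases "\<exists>l\<in>C. lit_val \<sigma> l = Some True")
    case True
    then obtain l where "l \<in> C" "lit_val \<sigma> l = Some True" by blast
    moreover from this have "lit_true (compose \<alpha> \<sigma>) l" by (cases l) (auto simp: compose_def)
    ultimately show ?thesis by blast
  next
    case False
    then have "restrict_clause \<sigma> C = Some {l\<in>C. lit_val \<sigma> l = None}"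
      unfolding restrict_clause_def by simp
    then have "{l\<in>C. lit_val \<sigma> l = None} \<in> restrict_cnf \<sigma> F"
      using \<open>C \<in> F\<close> unfolding restrict_cnf_def by blast
    with assms have "\<exists>l\<in>{l\<in>C. lit_val \<sigma> l = None}. lit_true \<alpha> l"
      unfolding models_def by (rule bspec)
    then obtain l where "l \<in> C" "lit_val \<sigma> l = None" "lit_true \<alpha> l" by blast
    moreover from this have "lit_true (compose \<alpha> \<sigma>) l" by (cases l) (auto simp: compose_def)
    ultimately show ?thesis by blast
  qed
qed

lemma hamming_compose_le:
  assumes "finite C" and "dom \<sigma> = dom (neg_clause C)"
  shows "hamming V \<alpha> (compose \<alpha> \<sigma>) \<le> card C"
proof -
  have "dom (neg_clause C) \<subseteq> vars_clause C"
    unfolding neg_clause_def vars_clause_def dom_def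
    by (auto split: if_splits intro: image_eqI[of _ var "Pos _"] image_eqI[of _ var "Neg _"])
  moreover have "{x\<in>V. \<alpha> x \<noteq> compose \<alpha> \<sigma> x} \<subseteq> dom \<sigma>"
    unfolding compose_def by (auto split: option.splits)
  ultimately have "{x\<in>V. \<alpha> x \<noteq> compose \<alpha> \<sigma> x} \<subseteq> vars_clause C"
    using assms(2) by blast
  then have "hamming V \<alpha> (compose \<alpha> \<sigma>) \<le> card (vars_clause C)"
    unfolding hamming_def vars_clause_def using assms(1) by (simp add: card_mono)
  also have "\<dots> \<le> card C"
    unfolding vars_clause_def using assms(1) by (rule card_image_le)
  finally show ?thesis .
qed

definition optimal_models :: "'v list \<Rightarrow> 'v cnf \<Rightarrow> ('v \<Rightarrow> bool) set" where
  "optimal_models bs \<Gamma> = {\<alpha>. models \<alpha> \<Gamma> \<and> cost bs \<alpha> = cnf_cost bs \<Gamma>}"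

lemma cnf_cost_le:
  assumes "models \<beta> \<Gamma>"
  shows "cnf_cost bs \<Gamma> \<le> cost bs \<beta>"
proof -
  have "cost bs \<alpha> \<le> length bs" for \<alpha>
    unfolding cost_def using sum_mono[of "{..<length bs}" _ "\<lambda>_. 1::nat"] by fastforce
  then have "finite {cost bs \<alpha> | \<alpha>. models \<alpha> \<Gamma>}"
    by (auto intro: finite_subset[of _ "{..length bs}"])
  then show ?thesis unfolding cnf_cost_def using assms by (auto intro: Min_le)
qed

lemma cost_spr_repair_optimal:
  assumes spr: "cost_spr bs F C" and "\<Gamma> \<subseteq> F"
    and opt: "\<alpha> \<in> optimal_models bs \<Gamma>" and "models \<alpha> F"
    and falsified: "\<forall>l\<in>C. \<not> lit_true \<alpha> l"
  obtains \<sigma> where "dom \<sigma> = dom (neg_clause C)"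
    and "compose \<alpha> \<sigma> \<in> optimal_models bs \<Gamma>" and "models (compose \<alpha> \<sigma>) (insert C F)"
proof -
  obtain \<sigma> where dom: "dom \<sigma> = dom (neg_clause C)"
    and up: "\<forall>D\<in>restrict_cnf \<sigma> (insert C F). up_implies (restrict_cnf (neg_clause C) F) D"
    and cost_le: "\<forall>\<tau>. extends \<tau> (neg_clause C) \<longrightarrow> cost bs (compose \<tau> \<sigma>) \<le> cost bs \<tau>"
    using spr unfolding cost_spr_def by blast
  have ext: "extends \<alpha> (neg_clause C)" using falsified by (rule extends_neg_clause)
  then have "models \<alpha> (restrict_cnf (neg_clause C) F)"
    using \<open>models \<alpha> F\<close> by (rule models_restrict_cnf)
  then have "models \<alpha> (restrict_cnf \<sigma> (insert C F))"
    using up up_implies_sound unfolding models_def by blast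
  then have models: "models (compose \<alpha> \<sigma>) (insert C F)" by (rule models_compose)
  then have "models (compose \<alpha> \<sigma>) \<Gamma>" using \<open>\<Gamma> \<subseteq> F\<close> unfolding models_def by blast
  moreover have "cost bs (compose \<alpha> \<sigma>) \<le> cnf_cost bs \<Gamma>"
    using cost_le ext opt unfolding optimal_models_def by auto
  ultimately have "compose \<alpha> \<sigma> \<in> optimal_models bs \<Gamma>"
    unfolding optimal_models_def using cnf_cost_le[of "compose \<alpha> \<sigma>" \<Gamma> bs] by simp
  then show ?thesis by (rule that[OF dom _ models])
qed

lemma narrow_cost_spr_clause_true_in_optima:
  assumes dist: "\<forall>\<alpha>\<in>optimal_models bs \<Gamma>. \<forall>\<beta>\<in>optimal_models bs \<Gamma>.
      (\<exists>x\<in>vars_cnf \<Gamma>. \<alpha> x \<noteq> \<beta> x) \<longrightarrow> d \<le> hamming (vars_cnf \<Gamma>) \<alpha> \<beta>"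
    and "\<Gamma> \<subseteq> F" and optima_models: "\<forall>\<alpha>\<in>optimal_models bs \<Gamma>. models \<alpha> F"
    and spr: "cost_spr bs F C" and "finite C" and "card C < d"
    and vars: "vars_clause C \<subseteq> vars_cnf \<Gamma>"
    and opt: "\<alpha> \<in> optimal_models bs \<Gamma>"
  shows "\<exists>l\<in>C. lit_true \<alpha> l"
proof (rule ccontr)
  assume "\<not> ?thesis"
  then have falsified: "\<forall>l\<in>C. \<not> lit_true \<alpha> l" by blast
  obtain \<sigma> where dom: "dom \<sigma> = dom (neg_clause C)"
    and opt': "compose \<alpha> \<sigma> \<in> optimal_models bs \<Gamma>"
    and models: "models (compose \<alpha> \<sigma>) (insert C F)"
    using cost_spr_repair_optimal[OF spr \<open>\<Gamma> \<subseteq> F\<close> opt bspec[OF optima_models opt] falsified] .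
  have "hamming (vars_cnf \<Gamma>) \<alpha> (compose \<alpha> \<sigma>) < d"
    using hamming_compose_le[OF \<open>finite C\<close> dom] \<open>card C < d\<close> by (rule le_less_trans)
  then have agree: "\<forall>x\<in>vars_cnf \<Gamma>. \<alpha> x = compose \<alpha> \<sigma> x"
    using dist[rule_format, OF opt opt'] by (meson leD)
  have "\<exists>l\<in>C. lit_true (compose \<alpha> \<sigma>) l"
    using models unfolding models_def by simp
  then obtain l where "l \<in> C" "lit_true (compose \<alpha> \<sigma>) l" ..
  moreover have "var l \<in> vars_cnf \<Gamma>"
    using vars \<open>l \<in> C\<close> unfolding vars_clause_def by blast
  ultimately have "lit_true \<alpha> l" using agree by (cases l) auto
  then show False using falsified \<open>l \<in> C\<close> by blast
qed

lemma derivation_snoc: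
  "derivation bs \<Gamma> (Ds @ [s]) \<longleftrightarrow> derivation bs \<Gamma> Ds \<and> valid_step bs \<Gamma> (map fst Ds) s"
  unfolding derivation_def by (simp add: less_Suc_eq all_conj_distrib nth_append)

lemma valid_step_sound:
  assumes "valid_step bs \<Gamma> prev (D, t)" and "t \<noteq> CostSPR"
    and "models \<alpha> \<Gamma>" and prev: "models \<alpha> (set prev)"
  shows "\<exists>l\<in>D. lit_true \<alpha> l"
proof (cases t)
  case Axiom
  then show ?thesis using assms(1,3) unfolding models_def by simp
next
  case Weakening
  then obtain C where "C \<in> set prev" "C \<subseteq> D" using assms(1) by auto
  then show ?thesis using prev unfolding models_def by blast
next
  case Resolution
  then obtain C1 C2 x where C: "C1 \<in> set prev" "C2 \<in> set prev"
    and D: "D = (C1 - {Pos x}) \<union> (C2 - {Neg x})"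
    using assms(1) by auto
  obtain l1 l2 where l1: "l1 \<in> C1" "lit_true \<alpha> l1" and l2: "l2 \<in> C2" "lit_true \<alpha> l2"
    using prev C unfolding models_def by meson
  show ?thesis
  proof (cases "l1 = Pos x")
    case True
    then have "l2 \<noteq> Neg x" using l1 l2 by auto
    then show ?thesis using l2 D by blast
  next
    case False
    then show ?thesis using l1 D by blast
  qed
qed (use assms(2) in simp)

lemma derivation_preserves_models:
  assumes "derivation bs \<Gamma> Ds" and "\<forall>\<alpha>\<in>P. models \<alpha> \<Gamma>"
    and "\<forall>(D, t)\<in>set Ds. t = CostSPR \<longrightarrow> Q D"
    and spr: "\<And>prev D. Q D \<Longrightarrow> valid_step bs \<Gamma> prev (D, CostSPR)
      \<Longrightarrow> \<forall>\<alpha>\<in>P. models \<alpha> (\<Gamma> \<union> set prev) \<Longrightarrow> \<forall>\<alpha>\<in>P. \<exists>l\<in>D. lit_true \<alpha> l"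
  shows "\<forall>\<alpha>\<in>P. models \<alpha> (fst ` set Ds)"
  using assms(1,3)
proof (induction Ds rule: rev_induct)
  case Nil
  then show ?case by (simp add: models_def)
next
  case (snoc s Ds)
  obtain D t where s: "s = (D, t)" by fastforce
  have der: "derivation bs \<Gamma> Ds" and step: "valid_step bs \<Gamma> (map fst Ds) (D, t)"
    using snoc.prems(1) unfolding derivation_snoc s by auto
  have "\<forall>(D, t)\<in>set Ds. t = CostSPR \<longrightarrow> Q D"
    using snoc.prems(2) by auto
  with der have IH: "\<forall>\<alpha>\<in>P. models \<alpha> (fst ` set Ds)"
    by (rule snoc.IH)
  then have prev: "\<forall>\<alpha>\<in>P. models \<alpha> (\<Gamma> \<union> set (map fst Ds))"
    using assms(2) unfolding models_def by auto
  have "\<forall>\<alpha>\<in>P. \<exists>l\<in>D. lit_true \<alpha> l"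
  proof (cases "t = CostSPR")
    case True
    moreover have "Q D" using snoc.prems(2) s True by simp
    ultimately show ?thesis using spr[of D "map fst Ds"] step prev by simp
  next
    case False
    then show ?thesis using valid_step_sound[OF step] prev unfolding models_def by simp
  qed
  then show ?case using IH s by (simp add: models_def)
qed

theorem corollary5p4:
  fixes H :: "'v cnf" and Cs :: "'v clause list" and bs :: "'v list" and \<Gamma> :: "'v cnf"
    and k d :: nat and A :: "('v \<Rightarrow> bool) set"
    and Ds :: "('v clause \<times> rule_tag) list" and b :: 'v
  assumes enc: "maxsat_enc H Cs bs \<Gamma>"
    and cost_k: "cnf_cost bs \<Gamma> = k"
    and A_def: "A = {\<alpha>. models \<alpha> \<Gamma> \<and> cost bs \<alpha> = k}"
    and dist: "\<forall>\<alpha>\<in>A. \<forall>\<beta>\<in>A. (\<exists>x\<in>vars_cnf \<Gamma>. \<alpha> x \<noteq> \<beta> x) \<longrightarrow> d \<le> hamming (vars_cnf \<Gamma>) \<alpha> \<beta>"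
    and both: "\<forall>b'\<in>set bs. \<exists>\<alpha>\<in>A. \<exists>\<beta>\<in>A. \<not> \<alpha> b' \<and> \<beta> b'"
    and der: "derivation bs \<Gamma> Ds"
    and b: "b \<in> set bs"
    and unit: "{Pos b} \<in> fst ` set Ds"
  shows "\<exists>(D, t)\<in>set Ds. t = CostSPR \<and> d \<le> card D"
proof (rule ccontr)
  assume "\<not> ?thesis"
  then have narrow: "\<forall>(D, t)\<in>set Ds. t = CostSPR \<longrightarrow> card D < d" by auto
  have A: "A = optimal_models bs \<Gamma>"
    unfolding A_def optimal_models_def cost_k ..
  have "\<forall>\<alpha>\<in>A. models \<alpha> (fst ` set Ds)"
  proof (rule derivation_preserves_models[OF der _ narrow])
    show "\<forall>\<alpha>\<in>A. models \<alpha> \<Gamma>" unfolding A_def by blast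
  next
    fix prev D
    assume "card D < d" "valid_step bs \<Gamma> prev (D, CostSPR)" "\<forall>\<alpha>\<in>A. models \<alpha> (\<Gamma> \<union> set prev)"
    then show "\<forall>\<alpha>\<in>A. \<exists>l\<in>D. lit_true \<alpha> l"
      using narrow_cost_spr_clause_true_in_optima[OF dist[unfolded A], of "\<Gamma> \<union> set prev" D]
      unfolding A by auto
  qed
  moreover obtain \<alpha> where "\<alpha> \<in> A" "\<not> \<alpha> b" using both b by blast
  ultimately show False using unit unfolding models_def by fastforce
qed

end
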